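(* Let $N\ge 2$, $0<p<1\le q$ with $pq<1$, and let $(u,v)$ be a positive radially symmetric solution of $\Delta u=v^p$, $\Delta v=|\nabla u|^q$ in $\mathbb{R}^N$, written as functions of $r=|x|$. For $t=\ln r\in\mathbb{R}$ define $$Y(t)=\frac{rv'(r)}{v(r)},\qquad Z(t)=\frac{rv^p(r)}{u'(r)},\qquad W(t)=\frac{r\,(u'(r))^q}{v'(r)}.$$ Then for all $t\in\mathbb{R}$: $$0\le Y(t)\le\frac{2+q}{1-pq},\qquad N\le Z(t)\le N+\frac{p(2+q)}{1-pq},\qquad N+q\le W(t)\le N-2+\frac{2+q}{1-pq}.$$
   Context: A positive radially symmetric solution is a pair of radially symmetric functions $u,v\in C^2(\mathbb{R}^N)$, positive everywhere, satisfying the equations pointwise; for such solutions $u'(r)>0$ and $v'(r)>0$ for $r>0$, so $Y,Z,W$ are well defined. *)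

theory Defs
  imports "HOL-Analysis.Analysis"
begin

definition C2_with :: "('a::euclidean_space \<Rightarrow> real) \<Rightarrow> ('a \<Rightarrow> 'a) \<Rightarrow> ('a \<Rightarrow> 'a \<Rightarrow> 'a) \<Rightarrow> bool" where
  "C2_with f g H \<longleftrightarrow>
     (\<forall>x. (f has_derivative (\<lambda>h. g x \<bullet> h)) (at x)) \<and>
     (\<forall>x. (g has_derivative H x) (at x)) \<and>
     (\<forall>i\<in>Basis. \<forall>j\<in>Basis. continuous_on UNIV (\<lambda>x. H x i \<bullet> j))"

definition laplacian_of :: "('a::euclidean_space \<Rightarrow> 'a \<Rightarrow> 'a) \<Rightarrow> 'a \<Rightarrow> real" where
  "laplacian_of H x = (\<Sum>i\<in>Basis. H x i \<bullet> i)"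

definition radially_symmetric :: "('a::real_normed_vector \<Rightarrow> real) \<Rightarrow> bool" where
  "radially_symmetric f \<longleftrightarrow> (\<forall>x y. norm x = norm y \<longrightarrow> f x = f y)"

end

theory Submission
  imports Defs
begin

text \<open>Along a ray the system becomes \<open>u'' + (N-1)/r u' = v^p\<close>, \<open>v'' + (N-1)/r v' = (u')^q\<close>
  with \<open>u'(0) = 0\<close>, and the integrating factor \<open>r^(N-1)\<close> shows \<open>u', v' > 0\<close>. For the lower
  bounds, \<open>r^(N-1) u' (Z - N)\<close> vanishes at 0 and is nondecreasing because \<open>v\<close> is; then
  \<open>r^(N-1) v' (W - N - q)\<close> vanishes at 0 and is nondecreasing because the former quantity is
  nonnegative. The upper bounds are the constant solution \<open>(Y*, Z*, W*)\<close> of the autonomous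
  system satisfied by \<open>(Y, Z, W)\<close>. Suitably weighted gaps to these bounds form a cyclic
  system: the \<open>Y\<close>-gap is positive at 0 and nondecreasing while the \<open>W\<close>-gap is positive, the
  \<open>Z\<close>-gap vanishes at 0 and increases while the \<open>Y\<close>-gap is positive, and the \<open>W\<close>-gap vanishes
  at 0 and increases while the \<open>Z\<close>-gap is positive. A first-exit argument shows that all three
  stay positive.\<close>

lemma has_real_derivative_along_line:
  fixes F :: "'a::real_normed_vector \<Rightarrow> real"
  assumes "(F has_derivative F') (at (s *\<^sub>R e))"
  shows "((\<lambda>s. F (s *\<^sub>R e)) has_real_derivative F' e) (at s)"
proof -
  have lin: "linear F'" using assms has_derivative_linear by blast
  have "((\<lambda>s. F (s *\<^sub>R e)) has_derivative (\<lambda>h. F' (h *\<^sub>R e))) (at s)"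
    using has_derivative_compose[OF has_derivative_scaleR_left[OF has_derivative_ident] assms]
    by (simp add: o_def)
  moreover have "(\<lambda>h. F' (h *\<^sub>R e)) = (\<lambda>h. F' e * h)"
    using linear.scaleR[OF lin] by auto
  ultimately show ?thesis by (simp add: has_field_derivative_def)
qed

lemma radial_first_derivative:
  fixes f :: "'a::euclidean_space \<Rightarrow> real"
  assumes "\<forall>x. (f has_derivative (\<lambda>h. g x \<bullet> h)) (at x)"
  shows "((\<lambda>s. f (s *\<^sub>R e)) has_real_derivative g (s *\<^sub>R e) \<bullet> e) (at s)"
  using has_real_derivative_along_line[OF assms[rule_format]] .

lemma radial_second_derivative:
  fixes g :: "'a::euclidean_space \<Rightarrow> 'a"
  assumes "\<forall>x. (g has_derivative H x) (at x)"
  shows "((\<lambda>s. g (s *\<^sub>R e) \<bullet> e) has_real_derivative H (s *\<^sub>R e) e \<bullet> e) (at s)"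
proof -
  have "((\<lambda>x. g x \<bullet> e) has_derivative (\<lambda>h. H (s *\<^sub>R e) h \<bullet> e)) (at (s *\<^sub>R e))"
    using assms by (auto intro!: derivative_eq_intros)
  thus ?thesis by (rule has_real_derivative_along_line)
qed

lemma radially_symmetric_along_line:
  assumes "radially_symmetric f" and "norm e = 1"
  shows "f x = f (norm x *\<^sub>R e)"
proof -
  have "norm (norm x *\<^sub>R e) = norm x" using assms(2) by simp
  thus ?thesis using assms(1) unfolding radially_symmetric_def by metis
qed

lemma radial_gradient:
  fixes f :: "'a::euclidean_space \<Rightarrow> real"
  assumes d: "\<forall>x. (f has_derivative (\<lambda>h. g x \<bullet> h)) (at x)"
    and rad: "radially_symmetric f" and e: "norm e = 1" and x: "x \<noteq> 0"
  shows "g x = (g (norm x *\<^sub>R e) \<bullet> e / norm x) *\<^sub>R x"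
proof -
  define F where "F s = f (s *\<^sub>R e)" for s
  have "(F has_real_derivative g (norm x *\<^sub>R e) \<bullet> e) (at (norm x))"
    unfolding F_def by (rule radial_first_derivative[OF d])
  from has_derivative_compose[OF has_derivative_norm[OF x] this[unfolded has_field_derivative_def]]
  have "(f has_derivative (\<lambda>h. (g (norm x *\<^sub>R e) \<bullet> e) * (h \<bullet> sgn x))) (at x)"
    using radially_symmetric_along_line[OF rad e] by (simp add: o_def F_def mult.commute)
  from has_derivative_unique[OF d[rule_format] this]
  have gx: "g x \<bullet> h = (g (norm x *\<^sub>R e) \<bullet> e) * (h \<bullet> sgn x)" for h by meson
  show ?thesis
  proof (rule euclidean_eqI)
    fix b :: 'a
    show "g x \<bullet> b = (g (norm x *\<^sub>R e) \<bullet> e / norm x) *\<^sub>R x \<bullet> b"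
      using gx[of b] by (simp add: sgn_div_norm inner_commute divide_inverse)
  qed
qed

lemma norm_radial_gradient:
  fixes f :: "'a::euclidean_space \<Rightarrow> real"
  assumes "\<forall>x. (f has_derivative (\<lambda>h. g x \<bullet> h)) (at x)"
    and "radially_symmetric f" and e: "norm e = 1" and r: "r > 0"
  shows "norm (g (r *\<^sub>R e)) = \<bar>g (r *\<^sub>R e) \<bullet> e\<bar>"
proof -
  have "e \<noteq> 0" using e by auto
  hence "g (r *\<^sub>R e) = (g (r *\<^sub>R e) \<bullet> e) *\<^sub>R e"
    using radial_gradient[OF assms(1-3), of "r *\<^sub>R e"] e r by simp
  hence "norm (g (r *\<^sub>R e)) = \<bar>g (r *\<^sub>R e) \<bullet> e\<bar> * norm e"
    by (metis norm_scaleR real_norm_def)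
  thus ?thesis using e by simp
qed

lemma radial_gradient_at_origin:
  fixes f :: "'a::euclidean_space \<Rightarrow> real"
  assumes d: "\<forall>x. (f has_derivative (\<lambda>h. g x \<bullet> h)) (at x)" and rad: "radially_symmetric f"
  shows "g 0 \<bullet> e = 0"
proof -
  define F where "F s = f (s *\<^sub>R e)" for s
  have dF: "(F has_real_derivative g 0 \<bullet> e) (at 0)"
    unfolding F_def using radial_first_derivative[OF d, of e 0] by simp
  have "(\<lambda>s. F (- s)) = F"
    using rad unfolding radially_symmetric_def F_def by (metis norm_minus_cancel scaleR_minus_left)
  with dF have "(F has_real_derivative - (g 0 \<bullet> e)) (at 0)"
    using DERIV_mirror[of F "g 0 \<bullet> e" 0] by simp
  from DERIV_unique[OF dF this] show ?thesis by simp
qed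

lemma radial_hessian:
  fixes f :: "'a::euclidean_space \<Rightarrow> real"
  assumes C2: "C2_with f g H" and rad: "radially_symmetric f" and e: "norm e = 1" and r: "r > 0"
  shows "H (r *\<^sub>R e) h = (g (r *\<^sub>R e) \<bullet> e / r) *\<^sub>R h
           + ((H (r *\<^sub>R e) e \<bullet> e - g (r *\<^sub>R e) \<bullet> e / r) * (h \<bullet> e)) *\<^sub>R e"
proof -
  have d: "\<forall>x. (f has_derivative (\<lambda>h. g x \<bullet> h)) (at x)" and dg: "\<forall>x. (g has_derivative H x) (at x)"
    using C2 unfolding C2_with_def by auto
  define x where "x = r *\<^sub>R e"
  define D1 where "D1 s = g (s *\<^sub>R e) \<bullet> e" for s
  define phi where "phi s = D1 s / s" for s
  define phi' where "phi' = (H x e \<bullet> e * r - D1 r) / (r * r)"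
  have nx: "norm x = r" and x0: "x \<noteq> 0" and sx: "sgn x = e"
    using e r by (auto simp: x_def sgn_scaleR sgn_div_norm)
  have "(D1 has_real_derivative H x e \<bullet> e) (at r)"
    unfolding D1_def x_def by (rule radial_second_derivative[OF dg])
  hence "(phi has_real_derivative phi') (at r)"
    unfolding phi_def phi'_def using r by (auto intro!: derivative_eq_intros)
  from has_derivative_compose[OF has_derivative_norm[OF x0] this[unfolded has_field_derivative_def, folded nx]]
  have "((\<lambda>y. phi (norm y)) has_derivative (\<lambda>h. phi' * (h \<bullet> e))) (at x)"
    by (simp add: o_def nx sx)
  from has_derivative_scaleR[OF this has_derivative_ident]
  have dG: "((\<lambda>y. phi (norm y) *\<^sub>R y) has_derivative (\<lambda>h. phi r *\<^sub>R h + (phi' * (h \<bullet> e)) *\<^sub>R x)) (at x)"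
    by (simp add: nx)
  have G: "phi (norm y) *\<^sub>R y = g y" if "y \<in> - {0}" for y
    using radial_gradient[OF d rad e] that by (simp add: phi_def D1_def)
  have "(g has_derivative (\<lambda>h. phi r *\<^sub>R h + (phi' * (h \<bullet> e)) *\<^sub>R x)) (at x)"
    using x0 by (intro has_derivative_transform_within_open[OF dG open_Compl[OF closed_singleton] _ G]) auto
  from has_derivative_unique[OF dg[rule_format, of x] this]
  have "H x h = phi r *\<^sub>R h + (phi' * (h \<bullet> e)) *\<^sub>R x" by meson
  thus ?thesis
    using r by (simp add: x_def phi_def phi'_def D1_def field_simps)
qed

lemma radial_laplacian:
  fixes f :: "'a::euclidean_space \<Rightarrow> real"
  assumes "C2_with f g H" and "radially_symmetric f" and e: "norm e = 1" and "r > 0"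
  shows "laplacian_of H (r *\<^sub>R e)
           = H (r *\<^sub>R e) e \<bullet> e + (real DIM('a) - 1) / r * (g (r *\<^sub>R e) \<bullet> e)"
proof -
  define a where "a = g (r *\<^sub>R e) \<bullet> e / r"
  define b where "b = H (r *\<^sub>R e) e \<bullet> e - a"
  have "H (r *\<^sub>R e) h = a *\<^sub>R h + (b * (h \<bullet> e)) *\<^sub>R e" for h
    unfolding a_def b_def by (rule radial_hessian[OF assms])
  hence "laplacian_of H (r *\<^sub>R e) = (\<Sum>i\<in>Basis. a + b * ((e \<bullet> i) * (e \<bullet> i)))"
    unfolding laplacian_of_def
    by (intro sum.cong) (auto simp: inner_commute inner_add_right)
  also have "\<dots> = real DIM('a) * a + b * (e \<bullet> e)"
    by (simp add: sum.distrib sum_distrib_left[symmetric] euclidean_inner[of e e])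
  finally show ?thesis
    using e \<open>r > 0\<close> by (simp add: b_def a_def norm_eq_1 field_simps)
qed

lemma DERIV_power_mult:
  fixes w :: "real \<Rightarrow> real"
  assumes "(w has_real_derivative w') (at x)" and "x \<noteq> 0"
  shows "((\<lambda>x. x ^ m * w x) has_real_derivative x ^ m * (w' + m / x * w x)) (at x)"
proof -
  have "((\<lambda>x. x ^ m * w x) has_real_derivative real m * x ^ (m - 1) * w x + x ^ m * w') (at x)"
    using assms(1) by (auto intro!: derivative_eq_intros)
  moreover have "real m * x ^ (m - 1) * w x = x ^ m * (m / x * w x)"
    using assms(2) by (cases m) auto
  ultimately show ?thesis by (simp add: algebra_simps)
qed

lemma DERIV_pos_imp_pos:
  fixes f f' :: "real \<Rightarrow> real"
  assumes t: "t > 0" and f0: "f 0 = 0" and cont: "continuous_on {0..t} f"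
    and df: "\<And>x. 0 < x \<Longrightarrow> x < t \<Longrightarrow> (f has_real_derivative f' x) (at x)"
    and pos: "\<And>x. 0 < x \<Longrightarrow> x < t \<Longrightarrow> f' x > 0"
  shows "f t > 0"
proof -
  have "f 0 < f t"
    by (rule DERIV_pos_imp_increasing_open[OF t _ cont]) (use df pos in blast)
  thus ?thesis using f0 by simp
qed

lemma DERIV_nonneg_imp_nonneg:
  fixes f f' :: "real \<Rightarrow> real"
  assumes t: "t \<ge> 0" and f0: "f 0 = 0" and cont: "continuous_on {0..t} f"
    and df: "\<And>x. 0 < x \<Longrightarrow> x < t \<Longrightarrow> (f has_real_derivative f' x) (at x)"
    and nonneg: "\<And>x. 0 < x \<Longrightarrow> x < t \<Longrightarrow> f' x \<ge> 0"
  shows "f t \<ge> 0"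
proof -
  have "f 0 \<le> f t"
    by (rule DERIV_nonneg_imp_increasing_open[OF t _ cont]) (use df nonneg in blast)
  thus ?thesis using f0 by simp
qed

lemma radial_ode_pos:
  fixes w w' f :: "real \<Rightarrow> real" and m :: nat
  assumes m: "m \<ge> 1" and dw: "\<And>s. (w has_real_derivative w' s) (at s)"
    and ode: "\<And>s. s > 0 \<Longrightarrow> w' s + m / s * w s = f s"
    and f_pos: "\<And>s. s > 0 \<Longrightarrow> f s > 0" and t: "t > 0"
  shows "w t > 0"
proof -
  have "t ^ m * w t > 0"
  proof (rule DERIV_pos_imp_pos[OF t])
    show "0 ^ m * w 0 = 0" using m by (simp add: power_0_left)
    show "continuous_on {0..t} (\<lambda>s. s ^ m * w s)"
      using dw by (intro continuous_intros) (meson DERIV_isCont continuous_at_imp_continuous_on)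
    show "((\<lambda>s. s ^ m * w s) has_real_derivative s ^ m * f s) (at s)" if "0 < s" for s
      using DERIV_power_mult[OF dw, of s m] ode[OF that] that by simp
    show "s ^ m * f s > 0" if "0 < s" for s
      using f_pos[OF that] that by simp
  qed
  thus ?thesis using t by (simp add: zero_less_mult_iff)
qed

lemma cyclic_system_pos:
  fixes a b c a' b' c' :: "real \<Rightarrow> real"
  assumes cont: "continuous_on {0..} a" "continuous_on {0..} b" "continuous_on {0..} c"
    and init: "a 0 > 0" "b 0 = 0" "c 0 = 0"
    and da: "\<And>x. x > 0 \<Longrightarrow> (a has_real_derivative a' x) (at x)"
    and db: "\<And>x. x > 0 \<Longrightarrow> (b has_real_derivative b' x) (at x)"
    and dc: "\<And>x. x > 0 \<Longrightarrow> (c has_real_derivative c' x) (at x)"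
    and a'_nonneg: "\<And>x. x > 0 \<Longrightarrow> c x > 0 \<Longrightarrow> a' x \<ge> 0"
    and b'_pos: "\<And>x. x > 0 \<Longrightarrow> a x > 0 \<Longrightarrow> b' x > 0"
    and c'_pos: "\<And>x. x > 0 \<Longrightarrow> b x > 0 \<Longrightarrow> c' x > 0"
    and t: "t > 0"
  shows "a t > 0 \<and> b t > 0 \<and> c t > 0"
proof (rule ccontr)
  define S where "S = {x. x > 0 \<and> \<not> (a x > 0 \<and> b x > 0 \<and> c x > 0)}"
  assume "\<not> ?thesis"
  hence S_ne: "S \<noteq> {}" using t by (auto simp: S_def)
  define r0 where "r0 = Inf S"
  have "bdd_below S" unfolding bdd_below_def S_def by (intro exI[of _ 0]) auto
  hence below: "a y > 0 \<and> b y > 0 \<and> c y > 0" if "0 < y" "y < r0" for y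
    using that cInf_lower[of y S] by (force simp: S_def r0_def)
  have r0: "r0 \<ge> 0" unfolding r0_def by (rule cInf_greatest[OF S_ne]) (auto simp: S_def)
  have "a 0 \<le> a r0"
    using below a'_nonneg da
    by (intro DERIV_nonneg_imp_increasing_open[OF r0] continuous_on_subset[OF cont(1)]) auto
  with init(1) have "a r0 > 0" by simp
  with cont(1) r0 have "\<exists>d>0. \<forall>y\<in>{0..}. dist y r0 < d \<longrightarrow> dist (a y) (a r0) < a r0"
    unfolding continuous_on_iff by simp
  then obtain d where d: "d > 0" and a_pos_near: "\<And>y. y \<ge> 0 \<Longrightarrow> dist y r0 < d \<Longrightarrow> a y > 0"
    by (fastforce simp: dist_real_def)
  define R where "R = r0 + d / 2"
  have a_pos: "a y > 0" if "0 \<le> y" "y \<le> R" for y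
    using below[of y] a_pos_near[of y] init(1) that d by (cases "y = 0 \<or> r0 \<le> y") (auto simp: R_def dist_real_def)
  have b_pos: "b y > 0" if "0 < y" "y \<le> R" for y
    using that db b'_pos a_pos
    by (intro DERIV_pos_imp_pos[of y b b'] continuous_on_subset[OF cont(2)] init(2)) auto
  have c_pos: "c y > 0" if "0 < y" "y \<le> R" for y
    using that dc c'_pos b_pos
    by (intro DERIV_pos_imp_pos[of y c c'] continuous_on_subset[OF cont(3)] init(3)) auto
  have "R \<le> r0"
    unfolding r0_def
  proof (rule cInf_greatest[OF S_ne])
    fix s assume "s \<in> S"
    thus "R \<le> s" using a_pos[of s] b_pos[of s] c_pos[of s] by (cases "R \<le> s") (auto simp: S_def)
  qed
  thus False using d by (simp add: R_def)
qed

text \<open>The radial profiles: \<open>V\<close> is \<open>v\<close> along a ray with derivatives \<open>V1\<close>, \<open>V2\<close>, while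
  \<open>U1\<close>, \<open>U2\<close> are \<open>u'\<close>, \<open>u''\<close> (\<open>u\<close> itself never enters); \<open>m = N - 1\<close>.\<close>

locale radial_system =
  fixes V V1 V2 U1 U2 :: "real \<Rightarrow> real" and p q :: real and m :: nat
  assumes m: "m \<ge> 1" and p: "p > 0" and q: "q > 0" and pq: "p * q < 1"
    and dV: "\<And>s. (V has_real_derivative V1 s) (at s)"
    and dV1: "\<And>s. (V1 has_real_derivative V2 s) (at s)"
    and dU1: "\<And>s. (U1 has_real_derivative U2 s) (at s)"
    and V_pos: "\<And>s. V s > 0"
    and U1_0: "U1 0 = 0"
    and ode_U: "\<And>r. r > 0 \<Longrightarrow> U2 r + m / r * U1 r = V r powr p"
    and ode_V: "\<And>r. r > 0 \<Longrightarrow> V2 r + m / r * V1 r = \<bar>U1 r\<bar> powr q"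
begin

lemma cont_V: "continuous_on A V" and cont_V1: "continuous_on A V1" and cont_U1: "continuous_on A U1"
  using dV dV1 dU1 by (meson DERIV_isCont continuous_at_imp_continuous_on)+

lemma V_powr_pos: "V s powr p > 0"
  using V_pos[of s] by simp

lemma U1_pos: "r > 0 \<Longrightarrow> U1 r > 0"
  using V_powr_pos by (intro radial_ode_pos[OF m dU1 ode_U])

lemma U1_nonneg: "r \<ge> 0 \<Longrightarrow> U1 r \<ge> 0"
  using U1_pos U1_0 by (cases "r = 0") (auto intro: less_imp_le)

lemma ode_V_pos: "r > 0 \<Longrightarrow> V2 r + m / r * V1 r = U1 r powr q"
  using ode_V U1_pos by (simp add: less_imp_le)

lemma U1_powr_pos: "r > 0 \<Longrightarrow> U1 r powr q > 0"
  using U1_pos[of r] by simp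

lemma V1_pos: "r > 0 \<Longrightarrow> V1 r > 0"
  using U1_powr_pos by (intro radial_ode_pos[OF m dV1 ode_V_pos])

lemma cont_V_powr: "continuous_on A (\<lambda>x. V x powr p)"
  using V_pos by (intro continuous_intros cont_V) (auto simp: less_imp_neq[symmetric])

lemma cont_U1_powr: "continuous_on {0..} (\<lambda>x. U1 x powr q)"
  using U1_nonneg q by (intro continuous_on_powr' cont_U1 continuous_intros) auto

text \<open>With \<open>N = m + 1\<close> and \<open>Y, Z, W\<close> as in the theorem:
  \<open>Z_excess = r^m U1 (Z - N)\<close>, \<open>W_excess = r^m V1 (W - N - q)\<close>, \<open>Y_gap = V (Y* - Y)\<close>,
  \<open>Z_gap = r^m U1 (Z* - Z)\<close>, \<open>W_gap = r^m V1 (W* - W)\<close>.\<close>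

definition Z_excess :: "real \<Rightarrow> real"
  where "Z_excess x = x ^ m * (x * V x powr p - real (Suc m) * U1 x)"

definition W_excess :: "real \<Rightarrow> real"
  where "W_excess x = x ^ m * (x * U1 x powr q - (real (Suc m) + q) * V1 x)"

definition Y_star :: real
  where "Y_star = (2 + q) / (1 - p * q)"

definition Z_star :: real
  where "Z_star = real (Suc m) + p * Y_star"

definition W_star :: real
  where "W_star = real (Suc m) - 2 + Y_star"

definition Y_gap :: "real \<Rightarrow> real"
  where "Y_gap x = Y_star * V x - x * V1 x"

definition Z_gap :: "real \<Rightarrow> real"
  where "Z_gap x = x ^ m * (Z_star * U1 x - x * V x powr p)"

definition W_gap :: "real \<Rightarrow> real"
  where "W_gap x = x ^ m * (W_star * V1 x - x * U1 x powr q)"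

lemma U2_eq: "r > 0 \<Longrightarrow> U2 r = V r powr p - m / r * U1 r"
  using ode_U by (simp add: algebra_simps)

lemma V2_eq: "r > 0 \<Longrightarrow> V2 r = U1 r powr q - m / r * V1 r"
  using ode_V_pos by (simp add: algebra_simps)

lemma DERIV_Z_excess:
  assumes x: "x > 0"
  shows "(Z_excess has_real_derivative x ^ Suc m * (p * V x powr p * V1 x / V x)) (at x)"
proof -
  have x0: "x \<noteq> 0" using x by simp
  have "((\<lambda>x. x * V x powr p - real (Suc m) * U1 x) has_real_derivative
      V x powr p + x * (p * V x powr p * V1 x / V x) - real (Suc m) * U2 x) (at x)"
    by (auto intro!: derivative_eq_intros dU1 dV simp: V_pos powr_diff abs_of_pos)
  from DERIV_power_mult[OF this x0] show ?thesis
    unfolding Z_excess_def[abs_def] by (rule DERIV_cong) (simp add: U2_eq[OF x] x0 field_simps)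
qed

lemma Z_excess_nonneg: "t \<ge> 0 \<Longrightarrow> Z_excess t \<ge> 0"
proof (rule DERIV_nonneg_imp_nonneg[OF _ _ _ DERIV_Z_excess])
  show "Z_excess 0 = 0" using m by (simp add: Z_excess_def power_0_left)
  show "continuous_on {0..t} Z_excess"
    unfolding Z_excess_def[abs_def] by (intro continuous_intros cont_U1 cont_V_powr)
  show "x ^ Suc m * (p * V x powr p * V1 x / V x) \<ge> 0" if "0 < x" for x
    using V_pos[of x] V1_pos[OF that] p that by simp
qed

lemma DERIV_W_excess:
  assumes x: "x > 0"
  shows "(W_excess has_real_derivative q * U1 x powr q / U1 x * Z_excess x) (at x)"
proof -
  have x0: "x \<noteq> 0" and u: "U1 x \<noteq> 0" using x U1_pos[OF x] by auto
  have "((\<lambda>x. x * U1 x powr q - (real (Suc m) + q) * V1 x) has_real_derivative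
      U1 x powr q + x * (q * U1 x powr q * U2 x / U1 x) - (real (Suc m) + q) * V2 x) (at x)"
    using U1_pos[OF x] by (auto intro!: derivative_eq_intros dU1 dV1 simp: powr_diff abs_of_pos)
  from DERIV_power_mult[OF this x0] show ?thesis
    unfolding W_excess_def[abs_def]
    by (rule DERIV_cong) (simp add: Z_excess_def U2_eq[OF x] V2_eq[OF x] x0 u field_simps)
qed

lemma W_excess_nonneg: "t \<ge> 0 \<Longrightarrow> W_excess t \<ge> 0"
proof (rule DERIV_nonneg_imp_nonneg[OF _ _ _ DERIV_W_excess])
  show "W_excess 0 = 0" using m by (simp add: W_excess_def power_0_left)
  show "continuous_on {0..t} W_excess"
    unfolding W_excess_def[abs_def]
    by (intro continuous_intros cont_V1 continuous_on_subset[OF cont_U1_powr]) auto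
  show "q * U1 x powr q / U1 x * Z_excess x \<ge> 0" if "0 < x" for x
    using U1_pos[OF that] Z_excess_nonneg[of x] q that by simp
qed

lemma Y_star_pos: "Y_star > 0" and Y_star_eq: "Y_star * (1 - p * q) = 2 + q"
  using pq q by (simp_all add: Y_star_def)

lemma DERIV_Y_gap:
  assumes x: "x > 0"
  shows "(Y_gap has_real_derivative W_gap x / x ^ m) (at x)"
proof -
  have "(Y_gap has_real_derivative Y_star * V1 x - (V1 x + x * V2 x)) (at x)"
    unfolding Y_gap_def[abs_def] by (auto intro!: derivative_eq_intros dV dV1)
  thus ?thesis
    by (rule DERIV_cong) (use x in \<open>simp add: W_gap_def W_star_def V2_eq field_simps\<close>)
qed

lemma DERIV_Z_gap:
  assumes x: "x > 0"
  shows "(Z_gap has_real_derivative p * x ^ m * V x powr p / V x * Y_gap x) (at x)"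
proof -
  have x0: "x \<noteq> 0" using x by simp
  have "((\<lambda>x. Z_star * U1 x - x * V x powr p) has_real_derivative
      Z_star * U2 x - (V x powr p + x * (p * V x powr p * V1 x / V x))) (at x)"
    by (auto intro!: derivative_eq_intros dU1 dV simp: V_pos powr_diff abs_of_pos)
  from DERIV_power_mult[OF this x0] show ?thesis
    unfolding Z_gap_def[abs_def]
    by (rule DERIV_cong) (simp add: Y_gap_def Z_star_def U2_eq[OF x] x0 V_pos[THEN less_imp_neq, symmetric] field_simps)
qed

lemma DERIV_W_gap:
  assumes x: "x > 0"
  shows "(W_gap has_real_derivative q * U1 x powr q / U1 x * Z_gap x) (at x)"
proof -
  have x0: "x \<noteq> 0" and u: "U1 x \<noteq> 0" using x U1_pos[OF x] by auto
  have "((\<lambda>x. W_star * V1 x - x * U1 x powr q) has_real_derivative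
      W_star * V2 x - (U1 x powr q + x * (q * U1 x powr q * U2 x / U1 x))) (at x)"
    using U1_pos[OF x] by (auto intro!: derivative_eq_intros dU1 dV1 simp: powr_diff abs_of_pos)
  from DERIV_power_mult[OF this x0] show ?thesis
    unfolding W_gap_def[abs_def]
  proof (rule DERIV_cong)
    txt \<open>The remainder vanishes precisely because \<open>(1 - pq) Y* = 2 + q\<close>.\<close>
    have "x ^ m * (W_star * V2 x - (U1 x powr q + x * (q * U1 x powr q * U2 x / U1 x))
          + m / x * (W_star * V1 x - x * U1 x powr q)) - q * U1 x powr q / U1 x * Z_gap x
        = x ^ m * U1 x powr q * (Y_star * (1 - p * q) - (2 + q))" (is "?D - ?E = _")
      by (simp add: Z_gap_def W_star_def Z_star_def U2_eq[OF x] V2_eq[OF x] x0 u field_simps)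
    thus "?D = ?E" by (simp add: Y_star_eq)
  qed
qed

lemma gaps_pos:
  assumes "t > 0"
  shows "Y_gap t > 0 \<and> Z_gap t > 0 \<and> W_gap t > 0"
proof (rule cyclic_system_pos[OF _ _ _ _ _ _ DERIV_Y_gap DERIV_Z_gap DERIV_W_gap _ _ _ assms])
  show "continuous_on {0..} Y_gap" "continuous_on {0..} Z_gap" "continuous_on {0..} W_gap"
    unfolding Y_gap_def[abs_def] Z_gap_def[abs_def] W_gap_def[abs_def]
    by (intro continuous_intros cont_V cont_V1 cont_U1 cont_V_powr cont_U1_powr)+
  show "Y_gap 0 > 0" using Y_star_pos V_pos[of 0] by (simp add: Y_gap_def)
  show "Z_gap 0 = 0" "W_gap 0 = 0" using m by (simp_all add: Z_gap_def W_gap_def power_0_left)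
  show "W_gap x / x ^ m \<ge> 0" if "x > 0" "W_gap x > 0" for x
    using that by simp
  show "p * x ^ m * V x powr p / V x * Y_gap x > 0" if "x > 0" "Y_gap x > 0" for x
    using that p V_pos[of x] by simp
  show "q * U1 x powr q / U1 x * Z_gap x > 0" if "x > 0" "Z_gap x > 0" for x
    using that q U1_pos[of x] by simp
qed

lemma Y_Z_W_bounds:
  assumes r: "r > 0"
  shows "0 \<le> r * V1 r / V r" and "r * V1 r / V r \<le> Y_star"
    and "real (Suc m) \<le> r * V r powr p / U1 r" and "r * V r powr p / U1 r \<le> Z_star"
    and "real (Suc m) + q \<le> r * U1 r powr q / V1 r" and "r * U1 r powr q / V1 r \<le> W_star"
proof -
  have V: "V r > 0" and U1: "U1 r > 0" and V1: "V1 r > 0"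
    using V_pos U1_pos[OF r] V1_pos[OF r] by auto
  have rm: "r ^ m > 0" using r by simp
  have "0 \<le> r * V r powr p - real (Suc m) * U1 r"
    using Z_excess_nonneg[of r] r rm by (simp add: Z_excess_def zero_le_mult_iff)
  thus "real (Suc m) \<le> r * V r powr p / U1 r" using U1 by (simp add: le_divide_eq)
  have "0 \<le> r * U1 r powr q - (real (Suc m) + q) * V1 r"
    using W_excess_nonneg[of r] r rm by (simp add: W_excess_def zero_le_mult_iff)
  thus "real (Suc m) + q \<le> r * U1 r powr q / V1 r" using V1 by (simp add: le_divide_eq)
  show "0 \<le> r * V1 r / V r" using r V V1 by simp
  show "r * V1 r / V r \<le> Y_star"
    using gaps_pos[OF r] V by (simp add: Y_gap_def divide_le_eq)
  have "0 < Z_star * U1 r - r * V r powr p"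
    using gaps_pos[OF r] r by (simp add: Z_gap_def zero_less_mult_iff)
  thus "r * V r powr p / U1 r \<le> Z_star" using U1 by (simp add: divide_le_eq)
  have "0 < W_star * V1 r - r * U1 r powr q"
    using gaps_pos[OF r] r by (simp add: W_gap_def zero_less_mult_iff)
  thus "r * U1 r powr q / V1 r \<le> W_star" using V1 by (simp add: divide_le_eq)
qed

end

lemma radial_system_of_solution:
  fixes u v :: "'a::euclidean_space \<Rightarrow> real"
  assumes dim: "DIM('a) \<ge> 2" and pq: "0 < p" "0 < q" "p * q < 1"
    and C2u: "C2_with u gu Hu" and C2v: "C2_with v gv Hv" and v_pos: "\<forall>x. v x > 0"
    and rad: "radially_symmetric u" "radially_symmetric v"
    and eq1: "\<forall>x. laplacian_of Hu x = v x powr p"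
    and eq2: "\<forall>x. laplacian_of Hv x = norm (gu x) powr q"
    and e: "norm e = 1"
  shows "radial_system (\<lambda>s. v (s *\<^sub>R e)) (\<lambda>s. gv (s *\<^sub>R e) \<bullet> e) (\<lambda>s. Hv (s *\<^sub>R e) e \<bullet> e)
    (\<lambda>s. gu (s *\<^sub>R e) \<bullet> e) (\<lambda>s. Hu (s *\<^sub>R e) e \<bullet> e) p q (DIM('a) - 1)"
proof
  have du: "\<forall>x. (u has_derivative (\<lambda>h. gu x \<bullet> h)) (at x)" and dgu: "\<forall>x. (gu has_derivative Hu x) (at x)"
    and dgv: "\<forall>x. (gv has_derivative Hv x) (at x)"
    using C2u C2v unfolding C2_with_def by auto
  have N: "real (DIM('a) - 1) = real DIM('a) - 1" using dim by simp
  show "DIM('a) - 1 \<ge> 1" "p > 0" "q > 0" "p * q < 1" using dim pq by auto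
  show "((\<lambda>s. v (s *\<^sub>R e)) has_real_derivative gv (s *\<^sub>R e) \<bullet> e) (at s)" for s
    using C2v unfolding C2_with_def by (intro radial_first_derivative) auto
  show "((\<lambda>s. gv (s *\<^sub>R e) \<bullet> e) has_real_derivative Hv (s *\<^sub>R e) e \<bullet> e) (at s)"
    and "((\<lambda>s. gu (s *\<^sub>R e) \<bullet> e) has_real_derivative Hu (s *\<^sub>R e) e \<bullet> e) (at s)" for s
    using dgv dgu by (auto intro: radial_second_derivative)
  show "v (s *\<^sub>R e) > 0" for s using v_pos by simp
  show "gu (0 *\<^sub>R e) \<bullet> e = 0" using radial_gradient_at_origin[OF du rad(1)] by simp
  show "Hu (s *\<^sub>R e) e \<bullet> e + real (DIM('a) - 1) / s * (gu (s *\<^sub>R e) \<bullet> e) = v (s *\<^sub>R e) powr p"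
    if "s > 0" for s
    using radial_laplacian[OF C2u rad(1) e that] eq1 N by simp
  show "Hv (s *\<^sub>R e) e \<bullet> e + real (DIM('a) - 1) / s * (gv (s *\<^sub>R e) \<bullet> e)
      = \<bar>gu (s *\<^sub>R e) \<bullet> e\<bar> powr q" if "s > 0" for s
    using radial_laplacian[OF C2v rad(2) e that] eq2 norm_radial_gradient[OF du rad(1) e that] N
    by simp
qed

theorem lemma7p3:
  fixes u v :: "'a::euclidean_space \<Rightarrow> real"
    and gu gv :: "'a \<Rightarrow> 'a" and Hu Hv :: "'a \<Rightarrow> 'a \<Rightarrow> 'a"
    and p q :: real
  assumes dim: "DIM('a) \<ge> 2"
    and pq: "0 < p" "p < 1" "1 \<le> q" "p * q < 1"
    and C2u: "C2_with u gu Hu" and C2v: "C2_with v gv Hv"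
    and pos: "\<forall>x. u x > 0" "\<forall>x. v x > 0"
    and rad: "radially_symmetric u" "radially_symmetric v"
    and eq1: "\<forall>x. laplacian_of Hu x = v x powr p"
    and eq2: "\<forall>x. laplacian_of Hv x = norm (gu x) powr q"
  shows "\<forall>e r. norm e = 1 \<longrightarrow> r > 0 \<longrightarrow>
    (let N = real DIM('a);
         U = (\<lambda>s. u (s *\<^sub>R e)); V = (\<lambda>s. v (s *\<^sub>R e));
         Y = r * deriv V r / V r;
         Z = r * V r powr p / deriv U r;
         W = r * deriv U r powr q / deriv V r
     in 0 \<le> Y \<and> Y \<le> (2 + q) / (1 - p * q) \<and>
        N \<le> Z \<and> Z \<le> N + p * (2 + q) / (1 - p * q) \<and>
        N + q \<le> W \<and> W \<le> N - 2 + (2 + q) / (1 - p * q))"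
proof (intro allI impI, goal_cases)
  case (1 e r)
  have du: "\<forall>x. (u has_derivative (\<lambda>h. gu x \<bullet> h)) (at x)"
    and dv: "\<forall>x. (v has_derivative (\<lambda>h. gv x \<bullet> h)) (at x)"
    using C2u C2v unfolding C2_with_def by auto
  interpret radial_system "\<lambda>s. v (s *\<^sub>R e)" "\<lambda>s. gv (s *\<^sub>R e) \<bullet> e" "\<lambda>s. Hv (s *\<^sub>R e) e \<bullet> e"
    "\<lambda>s. gu (s *\<^sub>R e) \<bullet> e" "\<lambda>s. Hu (s *\<^sub>R e) e \<bullet> e" p q "DIM('a) - 1"
    using pq 1 by (intro radial_system_of_solution[OF dim _ _ _ C2u C2v pos(2) rad eq1 eq2]) auto
  have "deriv (\<lambda>s. u (s *\<^sub>R e)) r = gu (r *\<^sub>R e) \<bullet> e"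
    by (rule DERIV_imp_deriv[OF radial_first_derivative[OF du]])
  moreover have "deriv (\<lambda>s. v (s *\<^sub>R e)) r = gv (r *\<^sub>R e) \<bullet> e"
    by (rule DERIV_imp_deriv[OF radial_first_derivative[OF dv]])
  moreover have "real (Suc (DIM('a) - 1)) = real DIM('a)" by simp
  ultimately show ?case
    using Y_Z_W_bounds[OF \<open>r > 0\<close>] unfolding Let_def Y_star_def Z_star_def W_star_def by simp
qed

end
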